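(* For every $n$-qubit raw quantum circuit $C$, $$\mathfrak G_n\circ[\![E(C)]\!]=[\![C]\!]\circ\mathfrak G_n .$$
   Context: Raw quantum circuits. These are terms generated from the following gates, with their numbers of wires: $H$ ($1$), $P(\varphi)$ ($1$, for each $\varphi\in\mathbb R$), $\mathrm{CNOT}$ ($2$), the scalar $s(\varphi)$ ($0$), the identity $\mathrm{id}$ ($1$), the swap $\mathrm{SW}$ ($2$) and the empty circuit ($0$). They are combined by $\circ$ (same number of wires) and $\otimes$ (stacking, the first factor on top). Their semantics $[\![C]\!]$ is a linear map on $\mathbb C^{\{0,1\}^n}$, with $[\![C_2\circ C_1]\!]=[\![C_2]\!][\![C_1]\!]$ and $[\![C_1\otimes C_2]\!]=[\![C_1]\!]\otimes[\![C_2]\!]$. On gates: - $H|x\rangle=\frac1{\sqrt2}(|0\rangle+(-1)^x|1\rangle)$; - $P(\varphi)|x\rangle=e^{ix\varphi}|x\rangle$; - $\mathrm{CNOT}|x,y\rangle=|x,x\oplus y\rangle$; - $\mathrm{SW}|x,y\rangle=|y,x\rangle$; - $s(\varphi)$ is multiplication by $e^{i\varphi}$; - $\mathrm{id}$ and the empty circuit are identities. Raw LOPP-circuits. These are terms generated from $\mathrm{ph}(\varphi)$ ($1$ mode), $\mathrm{bs}(\theta)$ ($2$ modes), $\mathrm{id}$ ($1$ mode), $\mathrm{sw}$ ($2$ modes) and the empty circuit, combined by $\circ$ and $\otimes$. Their semantics is a matrix on $\mathbb C^{m}$ ($m$ modes, basis $|0\rangle,\dots,|m-1\rangle$ from top to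 bottom), with $\otimes$ interpreted as direct sum and: - $[\![\mathrm{ph}(\varphi)]\!]=(e^{i\varphi})$; - $[\![\mathrm{bs}(\theta)]\!]=\begin{pmatrix}\cos\theta&i\sin\theta\\i\sin\theta&\cos\theta\end{pmatrix}$; - $[\![\mathrm{sw}]\!]=\begin{pmatrix}0&1\\1&0\end{pmatrix}$; - $[\![\mathrm{id}]\!]=(1)$. For a circuit $C$, $C^{\otimes 0}$ is empty and $C^{\otimes(m+1)}=C\otimes C^{\otimes m}$. Gray code. $G_0(0)=\epsilon$, and $G_n(k)=0G_{n-1}(k)$ if $k<2^{n-1}$, while $G_n(k)=1G_{n-1}(2^n-1-k)$ if $k\ge 2^{n-1}$. The map $\mathfrak G_n:\mathbb C^{2^n}\to\mathbb C^{\{0,1\}^n}$ is $|k\rangle\mapsto|G_n(k)\rangle$. Encoding. For each $k,n,\ell$, let $\sigma_{k,n,\ell}$ be a $2^{k+n+\ell}$-mode raw LOPP-circuit built only from $\mathrm{id}$ and $\mathrm{sw}$ such that $\mathfrak G\circ[\![\sigma_{k,n,\ell}]\!]\circ\mathfrak G^{-1}|x,y,z\rangle=|x,z,y\rangle$ for all $x\in\{0,1\}^k$, $y\in\{0,1\}^n$, $z\in\{0,1\}^\ell$ (here $\mathfrak G=\mathfrak G_{k+n+\ell}$). For an $n$-qubit raw circuit $C$, set $E(C)=E_{0,0}(C)$, where $E_{k,\ell}(C)$ is a $2^{k+n+\ell}$-mode circuit defined inductively by the following rules. - Compositions: - $E_{k,\ell}(C_1\otimes C_2)=E_{k+n_1,\ell}(C_2)\circ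 E_{k,\ell+n_2}(C_1)$, where $C_i$ has $n_i$ wires; - $E_{k,\ell}(C_2\circ C_1)=E_{k,\ell}(C_2)\circ E_{k,\ell}(C_1)$. - Structural gates and scalars: - $E_{k,\ell}(\mathrm{SW})=\sigma_{k,\ell,2}\circ\sigma_{k+\ell,1,1}\circ\sigma_{k,2,\ell}$; - $E_{k,\ell}(\text{empty})=\mathrm{id}^{\otimes2^{k+\ell}}$; - $E_{k,\ell}(\mathrm{id})=\mathrm{id}^{\otimes 2^{k+\ell+1}}$; - $E_{k,\ell}(s(\varphi))=\mathrm{ph}(\varphi)^{\otimes2^{k+\ell}}$. - When $k=\ell=0$: - $E_{0,0}(H)=(\mathrm{id}\otimes\mathrm{ph}(-\frac\pi2))\circ\mathrm{bs}(\frac\pi4)\circ(\mathrm{id}\otimes\mathrm{ph}(-\frac\pi2))$; - $E_{0,0}(P(\varphi))=\mathrm{id}\otimes\mathrm{ph}(\varphi)$; - $E_{0,0}(\mathrm{CNOT})=\mathrm{id}\otimes\mathrm{id}\otimes\mathrm{sw}$. - When $(k,\ell)\neq(0,0)$: - $E_{k,\ell}(H)=\sigma_{k,\ell,1}\circ B_H^{\otimes2^{k+\ell-1}}\circ\sigma_{k,1,\ell}$; - $E_{k,\ell}(P(\varphi))=\sigma_{k,\ell,1}\circ B_P^{\otimes 2^{k+\ell-1}}\circ\sigma_{k,1,\ell}$; - $E_{k,\ell}(\mathrm{CNOT})=\sigma_{k,\ell,2}\circ B_C^{\otimes 2^{k+\ell-1}}\circ\sigma_{k,2,\ell}$. Here: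 - $B_H=E_{0,0}(H)\otimes\big((\mathrm{ph}(-\frac\pi2)\otimes\mathrm{id})\circ\mathrm{bs}(\frac\pi4)\circ(\mathrm{ph}(-\frac\pi2)\otimes\mathrm{id})\big)$; - $B_P=\mathrm{id}\otimes\mathrm{ph}(\varphi)\otimes\mathrm{ph}(\varphi)\otimes\mathrm{id}$; - $B_C=\mathrm{id}\otimes\mathrm{id}\otimes\mathrm{sw}\otimes\mathrm{sw}\otimes\mathrm{id}\otimes\mathrm{id}$. *)

theory Defs
  imports Complex_Main
begin

datatype qc = QH | QP real | QCNOT | QScal real | QId | QSW | QEmpty
  | QComp qc qc   (* QComp C2 C1 = C2 \<circ> C1 *)
  | QTens qc qc   (* QTens C1 C2 = C1 \<otimes> C2, C1 on top *)

fun qwires :: "qc \<Rightarrow> nat" where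
  "qwires QH = 1" | "qwires (QP _) = 1" | "qwires QCNOT = 2" | "qwires (QScal _) = 0"
| "qwires QId = 1" | "qwires QSW = 2" | "qwires QEmpty = 0"
| "qwires (QComp C2 C1) = qwires C1"
| "qwires (QTens C1 C2) = qwires C1 + qwires C2"

fun qwf :: "qc \<Rightarrow> bool" where
  "qwf (QComp C2 C1) = (qwf C2 \<and> qwf C1 \<and> qwires C1 = qwires C2)"
| "qwf (QTens C1 C2) = (qwf C1 \<and> qwf C2)"
| "qwf _ = True"

definition bitstrings :: "nat \<Rightarrow> bool list set" where
  "bitstrings n = {x. length x = n}"

definition bitval :: "bool \<Rightarrow> real" where "bitval b = (if b then 1 else 0)"

text \<open>Semantics as matrix entries: qsem C y x = <y| [[C]] |x>, for bitstrings x, y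
  of length qwires C (bit False = 0, True = 1).\<close>
fun qsem :: "qc \<Rightarrow> bool list \<Rightarrow> bool list \<Rightarrow> complex" where
  "qsem QH y x = (if hd x \<and> hd y then -1 else 1) / complex_of_real (sqrt 2)"
| "qsem (QP \<phi>) y x = (if y = x then exp (\<i> * complex_of_real (bitval (hd x) * \<phi>)) else 0)"
| "qsem QCNOT y x = (if y = [x!0, x!0 \<noteq> x!1] then 1 else 0)"
| "qsem (QScal \<phi>) y x = exp (\<i> * complex_of_real \<phi>)"
| "qsem QId y x = (if y = x then 1 else 0)"
| "qsem QSW y x = (if y = [x!1, x!0] then 1 else 0)"
| "qsem QEmpty y x = 1"
| "qsem (QComp C2 C1) y x =
     (\<Sum>z\<in>bitstrings (qwires C1). qsem C2 y z * qsem C1 z x)"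
| "qsem (QTens C1 C2) y x =
     qsem C1 (take (qwires C1) y) (take (qwires C1) x) *
     qsem C2 (drop (qwires C1) y) (drop (qwires C1) x)"

datatype lc = Lph real | Lbs real | LId | LSw | LEmpty
  | LComp lc lc   (* LComp C2 C1 = C2 \<circ> C1 *)
  | LTens lc lc   (* LTens C1 C2 = C1 \<otimes> C2 (direct sum, C1 on top) *)

fun lmodes :: "lc \<Rightarrow> nat" where
  "lmodes (Lph _) = 1" | "lmodes (Lbs _) = 2" | "lmodes LId = 1" | "lmodes LSw = 2"
| "lmodes LEmpty = 0"
| "lmodes (LComp C2 C1) = lmodes C1"
| "lmodes (LTens C1 C2) = lmodes C1 + lmodes C2"

fun lwf :: "lc \<Rightarrow> bool" where
  "lwf (LComp C2 C1) = (lwf C2 \<and> lwf C1 \<and> lmodes C1 = lmodes C2)"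
| "lwf (LTens C1 C2) = (lwf C1 \<and> lwf C2)"
| "lwf _ = True"

fun only_id_sw :: "lc \<Rightarrow> bool" where
  "only_id_sw LId = True" | "only_id_sw LSw = True" | "only_id_sw LEmpty = True"
| "only_id_sw (LComp C2 C1) = (only_id_sw C2 \<and> only_id_sw C1)"
| "only_id_sw (LTens C1 C2) = (only_id_sw C1 \<and> only_id_sw C2)"
| "only_id_sw _ = False"

text \<open>Semantics as matrix entries: lsem C i j = <i| [[C]] |j>, for i, j < lmodes C.\<close>
fun lsem :: "lc \<Rightarrow> nat \<Rightarrow> nat \<Rightarrow> complex" where
  "lsem (Lph \<phi>) i j = (if i = 0 \<and> j = 0 then exp (\<i> * complex_of_real \<phi>) else 0)"
| "lsem (Lbs \<theta>) i j =
     (if i < 2 \<and> j < 2 then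
        (if i = j then complex_of_real (cos \<theta>) else \<i> * complex_of_real (sin \<theta>))
      else 0)"
| "lsem LId i j = (if i = 0 \<and> j = 0 then 1 else 0)"
| "lsem LSw i j = (if i < 2 \<and> j < 2 \<and> i \<noteq> j then 1 else 0)"
| "lsem LEmpty i j = 0"
| "lsem (LComp C2 C1) i j = (\<Sum>t<lmodes C1. lsem C2 i t * lsem C1 t j)"
| "lsem (LTens C1 C2) i j =
     (if i < lmodes C1 \<and> j < lmodes C1 then lsem C1 i j
      else if lmodes C1 \<le> i \<and> lmodes C1 \<le> j then lsem C2 (i - lmodes C1) (j - lmodes C1)
      else 0)"

fun lpow :: "lc \<Rightarrow> nat \<Rightarrow> lc" where
  "lpow C 0 = LEmpty"
| "lpow C (Suc m) = LTens C (lpow C m)"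

fun gray :: "nat \<Rightarrow> nat \<Rightarrow> bool list" where
  "gray 0 k = []"
| "gray (Suc n) k = (if k < 2 ^ n then False # gray n k
                     else True # gray n (2 ^ Suc n - 1 - k))"

text \<open>Matrix of \<G>_n : C^(2^n) \<rightarrow> C^({0,1}^n), |k> \<mapsto> |G_n(k)>, and of its inverse.\<close>
definition grayM :: "nat \<Rightarrow> bool list \<Rightarrow> nat \<Rightarrow> complex" where
  "grayM n y k = (if y = gray n k then 1 else 0)"

definition grayInvM :: "nat \<Rightarrow> nat \<Rightarrow> bool list \<Rightarrow> complex" where
  "grayInvM n k y = (if y = gray n k then 1 else 0)"

definition sigma_spec :: "(nat \<Rightarrow> nat \<Rightarrow> nat \<Rightarrow> lc) \<Rightarrow> bool" where
  "sigma_spec sig \<longleftrightarrow>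
    (\<forall>k n l. let N = k + n + l; s = sig k n l in
       only_id_sw s \<and> lwf s \<and> lmodes s = 2 ^ N \<and>
       (\<forall>x y z u. length x = k \<longrightarrow> length y = n \<longrightarrow> length z = l \<longrightarrow> length u = N \<longrightarrow>
          (\<Sum>i<2 ^ N. \<Sum>j<2 ^ N. grayM N u i * lsem s i j * grayInvM N j (x @ y @ z))
          = (if u = x @ z @ y then 1 else 0)))"

definition EH00 :: lc where
  "EH00 = LComp (LTens LId (Lph (-pi/2))) (LComp (Lbs (pi/4)) (LTens LId (Lph (-pi/2))))"

definition BH :: lc where
  "BH = LTens EH00
          (LComp (LTens (Lph (-pi/2)) LId) (LComp (Lbs (pi/4)) (LTens (Lph (-pi/2)) LId)))"

definition BP :: "real \<Rightarrow> lc" where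
  "BP \<phi> = LTens LId (LTens (Lph \<phi>) (LTens (Lph \<phi>) LId))"

definition BC :: lc where
  "BC = LTens LId (LTens LId (LTens LSw (LTens LSw (LTens LId LId))))"

fun enc :: "(nat \<Rightarrow> nat \<Rightarrow> nat \<Rightarrow> lc) \<Rightarrow> nat \<Rightarrow> nat \<Rightarrow> qc \<Rightarrow> lc" where
  "enc sig k l (QTens C1 C2) =
     LComp (enc sig (k + qwires C1) l C2) (enc sig k (l + qwires C2) C1)"
| "enc sig k l (QComp C2 C1) = LComp (enc sig k l C2) (enc sig k l C1)"
| "enc sig k l QSW = LComp (sig k l 2) (LComp (sig (k + l) 1 1) (sig k 2 l))"
| "enc sig k l QEmpty = lpow LId (2 ^ (k + l))"
| "enc sig k l QId = lpow LId (2 ^ (k + l + 1))"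
| "enc sig k l (QScal \<phi>) = lpow (Lph \<phi>) (2 ^ (k + l))"
| "enc sig k l QH =
     (if k = 0 \<and> l = 0 then EH00
      else LComp (sig k l 1) (LComp (lpow BH (2 ^ (k + l - 1))) (sig k 1 l)))"
| "enc sig k l (QP \<phi>) =
     (if k = 0 \<and> l = 0 then LTens LId (Lph \<phi>)
      else LComp (sig k l 1) (LComp (lpow (BP \<phi>) (2 ^ (k + l - 1))) (sig k 1 l)))"
| "enc sig k l QCNOT =
     (if k = 0 \<and> l = 0 then LTens LId (LTens LId LSw)
      else LComp (sig k l 2) (LComp (lpow BC (2 ^ (k + l - 1))) (sig k 2 l)))"

definition E :: "(nat \<Rightarrow> nat \<Rightarrow> nat \<Rightarrow> lc) \<Rightarrow> qc \<Rightarrow> lc" where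
  "E sig C = enc sig 0 0 C"

end

theory Submission
  imports Defs
begin

text \<open>
  By induction on the circuit, \<open>enc sig k l C\<close> acts in the Gray-code basis as
  \<open>id \<otimes> \<lbrakk>C\<rbrakk> \<otimes> id\<close> with identities of dimension \<open>2^k\<close> and \<open>2^l\<close>. Composition is then
  matrix product, and a tensor product only regroups the identity factors. For a gate, the
  permutations \<open>\<sigma>\<close> move its wires to the end, where the Gray index of \<open>a @ b\<close> splits into a
  block number and the Gray index of \<open>b\<close> behind the parity bit of the index of \<open>a\<close>. That parity
  bit reflects the order inside odd blocks, which is why \<open>B\<^sub>H\<close>, \<open>B\<^sub>P\<close> and \<open>B\<^sub>C\<close> are the gate
  next to its mirrored copy.
\<close>

section \<open>The inverse Gray code\<close>

fun gray_index :: "bool list \<Rightarrow> nat" where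
  "gray_index [] = 0"
| "gray_index (b # w) = (if b then 2 ^ Suc (length w) - 1 - gray_index w else gray_index w)"

lemma gray_index_less: "gray_index w < 2 ^ length w"
  by (induction w) auto

lemma length_gray [simp]: "length (gray n k) = n"
  by (induction n arbitrary: k) auto

lemma gray_gray_index [simp]: "gray (length w) (gray_index w) = w"
proof (induction w)
  case (Cons b w)
  have "gray_index w < 2 ^ length w" by (rule gray_index_less)
  with Cons show ?case by auto
qed simp

lemma gray_index_gray: "k < 2 ^ n \<Longrightarrow> gray_index (gray n k) = k"
  by (induction n arbitrary: k) auto

lemma gray_index_inj: "length u = length v \<Longrightarrow> gray_index u = gray_index v \<Longrightarrow> u = v"
  by (metis gray_gray_index)

lemma gray_eq_iff_gray_index: "length y = n \<Longrightarrow> k < 2 ^ n \<Longrightarrow> y = gray n k \<longleftrightarrow> k = gray_index y"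
  using gray_index_gray gray_gray_index by metis

lemma bitstrings_iff [simp]: "w \<in> bitstrings n \<longleftrightarrow> length w = n"
  by (simp add: bitstrings_def)

lemma finite_bitstrings [simp]: "finite (bitstrings n)"
proof -
  have "bitstrings n = {xs. set xs \<subseteq> UNIV \<and> length xs = n}"
    by (auto simp: bitstrings_def)
  then show ?thesis using finite_lists_length_eq[of "UNIV :: bool set" n] by simp
qed

lemma bij_betw_gray_index: "bij_betw gray_index (bitstrings n) {..<2 ^ n}"
proof (rule bij_betw_imageI)
  show "inj_on gray_index (bitstrings n)"
    by (auto simp: inj_on_def bitstrings_def intro: gray_index_inj)
  show "gray_index ` bitstrings n = {..<2 ^ n}"
  proof (intro equalityI subsetI)
    fix t :: nat assume "t \<in> {..<2 ^ n}"
    then have "t = gray_index (gray n t)" by (simp add: gray_index_gray)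
    then show "t \<in> gray_index ` bitstrings n" by (auto simp: bitstrings_def)
  qed (auto simp: bitstrings_def gray_index_less)
qed

lemma sum_over_gray_index: "(\<Sum>t<2 ^ n. f t) = (\<Sum>w\<in>bitstrings n. f (gray_index w))"
  by (rule sum.reindex_bij_betw[OF bij_betw_gray_index, symmetric])

lemma sum_grayM_left: "length y = n \<Longrightarrow> (\<Sum>j<2 ^ n. grayM n y j * f j) = f (gray_index y)"
  using gray_index_less[of y]
  by (simp add: grayM_def gray_eq_iff_gray_index if_distrib[of "\<lambda>c. c * _"] cong: if_cong)

lemma sum_grayInvM_right: "length y = n \<Longrightarrow> (\<Sum>j<2 ^ n. f j * grayInvM n j y) = f (gray_index y)"
  using gray_index_less[of y]
  by (simp add: grayInvM_def gray_eq_iff_gray_index if_distrib[of "\<lambda>c. _ * c"] cong: if_cong)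

lemma sum_bitstrings_delta:
  "c \<in> bitstrings n \<Longrightarrow> (\<Sum>w\<in>bitstrings n. (if w = c then 1 else 0) * f w) = (f c :: complex)"
  "c \<in> bitstrings n \<Longrightarrow> (\<Sum>w\<in>bitstrings n. f w * (if w = c then 1 else 0)) = (f c :: complex)"
  by (simp_all add: if_distrib[of "\<lambda>c. c * _"] if_distrib[of "\<lambda>c. _ * c"] cong: if_cong)

lemma lsem_LComp_bitstrings:
  "lmodes B = 2 ^ n \<Longrightarrow>
   lsem (LComp A B) i j = (\<Sum>w\<in>bitstrings n. lsem A i (gray_index w) * lsem B (gray_index w) j)"
  by (simp add: sum_over_gray_index)

lemma gray_index_append:
  "gray_index (a @ b) = 2 ^ length b * gray_index a
     + (if even (gray_index a) then gray_index b else 2 ^ length b - 1 - gray_index b)"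
proof (induction a)
  case (Cons x a)
  show ?case
  proof (cases x)
    case True
    define P :: nat where "P = 2 ^ length b"
    define Q :: nat where "Q = 2 ^ length a"
    define g where "g = gray_index a"
    define h where "h = 2 * Q - 1 - g"
    have "g < Q" using gray_index_less[of a] by (simp add: g_def Q_def)
    then have ghQ: "g + h + 1 = 2 * Q" by (simp add: h_def)
    then have par: "even h = odd g" by presburger
    have gh: "P * g + P * h + P = 2 * (P * Q)"
      using arg_cong[OF ghQ, of "\<lambda>t. P * t"] by (simp add: algebra_simps)
    have gb: "gray_index b < P" using gray_index_less[of b] by (simp add: P_def)
    have IH: "gray_index (a @ b) = P * g + (if even g then gray_index b else P - 1 - gray_index b)"
      using Cons.IH by (simp add: P_def g_def)
    have "gray_index ((x # a) @ b) = 2 * (P * Q) - 1 - gray_index (a @ b)"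
      using True by (simp add: P_def Q_def power_add mult.commute)
    also have "\<dots> = P * h + (if even h then gray_index b else P - 1 - gray_index b)"
      using IH gh gb par by auto
    finally show ?thesis
      using True by (simp add: P_def Q_def g_def h_def)
  qed (use Cons in simp)
qed simp

lemma gray_index_append_pairs:
  "gray_index (a @ b) = 2 ^ Suc (length b) * (gray_index a div 2) + gray_index (odd (gray_index a) # b)"
proof -
  have gb: "gray_index b < 2 ^ length b" by (rule gray_index_less)
  obtain q where "gray_index a = 2 * q \<or> gray_index a = 2 * q + 1"
    by (metis oddE evenE)
  then show ?thesis
    using gb by (auto simp: gray_index_append algebra_simps)
qed

lemma lmodes_lpow: "lmodes (lpow B c) = c * lmodes B"
  by (induction c) auto

lemma lsem_lpow_block:
  assumes "lmodes B = m" "r < m" "r' < m"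
  shows "p < c \<Longrightarrow> p' < c \<Longrightarrow>
    lsem (lpow B c) (m * p + r) (m * p' + r') = (if p = p' then lsem B r r' else 0)"
proof (induction c arbitrary: p p')
  case (Suc c)
  show ?case
  proof (cases p; cases p')
    fix q q' assume pq: "p = Suc q" "p' = Suc q'"
    have "m * p + r - m = m * q + r" "m * p' + r' - m = m * q' + r'" using pq by simp_all
    then show ?thesis using Suc assms pq by auto
  qed (use assms in \<open>auto simp: add.commute[of m] trans_le_add2\<close>)
qed simp

section \<open>Gates acting on a block of wires\<close>

definition embed_block :: "nat \<Rightarrow> nat \<Rightarrow> (bool list \<Rightarrow> bool list \<Rightarrow> complex) \<Rightarrow> bool list \<Rightarrow> bool list \<Rightarrow> complex" where
  "embed_block k n M u v =
     (if take k u = take k v \<and> drop (k + n) u = drop (k + n) v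
      then M (take n (drop k u)) (take n (drop k v)) else 0)"

lemma split_length_sum:
  assumes "length u = k + n + l"
  obtains x y z where "u = x @ y @ z" "length x = k" "length y = n" "length z = l"
proof
  show "u = take k u @ take n (drop k u) @ drop (k + n) u"
    by (metis append_take_drop_id drop_drop add.commute)
qed (use assms in simp_all)

lemma embed_block_append:
  assumes "length x = k" "length x' = k" "length y = n" "length y' = n" "length z = length z'"
  shows "embed_block k n M (x @ y @ z) (x' @ y' @ z') = (if x = x' \<and> z = z' then M y y' else 0)"
  using assms by (simp add: embed_block_def)

lemma embed_block_0: "length u = n \<Longrightarrow> length v = n \<Longrightarrow> embed_block 0 n M u v = M u v"
  by (simp add: embed_block_def)

lemma embed_block_cong:
  assumes "\<And>y x. length y = n \<Longrightarrow> length x = n \<Longrightarrow> M y x = M' y x"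
    and "length u = k + n + l" "length v = k + n + l"
  shows "embed_block k n M u v = embed_block k n M' u v"
  using assms by (simp add: embed_block_def)

lemma embed_block_embed_block:
  assumes "length u = k + m + n + p + l" "length v = k + m + n + p + l"
  shows "embed_block k (m + n + p) (embed_block m n A) u v = embed_block (k + m) n A u v"
proof -
  obtain a b c d e where u: "u = a @ b @ c @ d @ e"
    "length a = k" "length b = m" "length c = n" "length d = p" "length e = l"
    using assms(1) by (metis split_length_sum add.assoc)
  obtain a' b' c' d' e' where v: "v = a' @ b' @ c' @ d' @ e'"
    "length a' = k" "length b' = m" "length c' = n" "length d' = p" "length e' = l"
    using assms(2) by (metis split_length_sum add.assoc)
  have "embed_block k (m + n + p) (embed_block m n A) (a @ (b @ c @ d) @ e) (a' @ (b' @ c' @ d') @ e')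
      = (if a = a' \<and> e = e' then embed_block m n A (b @ c @ d @ []) (b' @ c' @ d' @ []) else 0)"
    using u v by (subst embed_block_append) simp_all
  moreover have "embed_block (k + m) n A ((a @ b) @ c @ d @ e) ((a' @ b') @ c' @ d' @ e')
      = (if a @ b = a' @ b' \<and> d @ e = d' @ e' then A c c' else 0)"
    using u v by (subst embed_block_append) simp_all
  ultimately show ?thesis
    using u v by (simp add: embed_block_append del: append_Nil2)
qed

lemma sum_embed_block_mult:
  assumes "length u = k + n + l" "length v = k + n + l"
  shows "(\<Sum>w\<in>bitstrings (k + n + l). embed_block k n A u w * embed_block k n B w v)
       = embed_block k n (\<lambda>y x. \<Sum>t\<in>bitstrings n. A y t * B t x) u v"
proof -
  obtain x y z where u: "u = x @ y @ z" "length x = k" "length y = n" "length z = l"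
    using assms(1) by (rule split_length_sum)
  obtain x' y' z' where v: "v = x' @ y' @ z'" "length x' = k" "length y' = n" "length z' = l"
    using assms(2) by (rule split_length_sum)
  have summand: "embed_block k n A u (a @ t @ c) * embed_block k n B (a @ t @ c) v
      = (if a = x \<and> c = z \<and> x = x' \<and> z = z' then A y t * B t y' else 0)"
    if "length a = k" "length t = n" "length c = l" for a t c
    using that u v by (auto simp: embed_block_append)
  define f where "f t = x @ t @ z" for t
  have "(\<Sum>w\<in>bitstrings (k + n + l). embed_block k n A u w * embed_block k n B w v)
      = (\<Sum>w\<in>f ` bitstrings n. embed_block k n A u w * embed_block k n B w v)"
  proof (rule sum.mono_neutral_right)
    show "f ` bitstrings n \<subseteq> bitstrings (k + n + l)" using u by (auto simp: f_def)
    show "\<forall>w\<in>bitstrings (k + n + l) - f ` bitstrings n. embed_block k n A u w * embed_block k n B w v = 0"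
    proof
      fix w assume w: "w \<in> bitstrings (k + n + l) - f ` bitstrings n"
      then have "length w = k + n + l" by simp
      then obtain a t c where "w = a @ t @ c" "length a = k" "length t = n" "length c = l"
        by (rule split_length_sum)
      with w show "embed_block k n A u w * embed_block k n B w v = 0"
        by (auto simp: summand f_def)
    qed
  qed simp
  also have "\<dots> = (\<Sum>t\<in>bitstrings n. embed_block k n A u (f t) * embed_block k n B (f t) v)"
    by (rule sum.reindex_cong[of f]) (auto simp: inj_on_def f_def)
  also have "\<dots> = embed_block k n (\<lambda>y x. \<Sum>t\<in>bitstrings n. A y t * B t x) u v"
    using u v by (auto simp: f_def summand embed_block_append)
  finally show ?thesis .
qed

lemma sum_embed_block_tensor:
  assumes "length y = n1 + n2" "length x = n1 + n2"
  shows "(\<Sum>t\<in>bitstrings (n1 + n2). embed_block n1 n2 A y t * embed_block 0 n1 B t x)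
       = B (take n1 y) (take n1 x) * A (drop n1 y) (drop n1 x)"
proof -
  define c where "c = take n1 y @ drop n1 x"
  have "embed_block n1 n2 A y t * embed_block 0 n1 B t x
      = (if t = c then B (take n1 y) (take n1 x) * A (drop n1 y) (drop n1 x) else 0)"
    if "length t = n1 + n2" for t
  proof -
    have "t = c \<longleftrightarrow> take n1 y = take n1 t \<and> drop n1 t = drop n1 x"
      using that assms unfolding c_def
      by (metis append_eq_append_conv append_take_drop_id length_take)
    then show ?thesis using that assms by (auto simp: embed_block_def c_def)
  qed
  then have "(\<Sum>t\<in>bitstrings (n1 + n2). embed_block n1 n2 A y t * embed_block 0 n1 B t x)
      = (\<Sum>t\<in>bitstrings (n1 + n2).
           if t = c then B (take n1 y) (take n1 x) * A (drop n1 y) (drop n1 x) else 0)"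
    by (intro sum.cong) simp_all
  moreover have "length c = n1 + n2" using assms by (simp add: c_def)
  ultimately show ?thesis by simp
qed

lemma embed_block_diagonal:
  assumes "length u = k + n + l" "length v = k + n + l"
  shows "embed_block k n (\<lambda>y x. if y = x then c else 0) u v = (if u = v then c else 0)"
proof -
  obtain x y z where "u = x @ y @ z" "length x = k" "length y = n" "length z = l"
    using assms(1) by (rule split_length_sum)
  moreover obtain x' y' z' where "v = x' @ y' @ z'" "length x' = k" "length y' = n" "length z' = l"
    using assms(2) by (rule split_length_sum)
  ultimately show ?thesis by (auto simp: embed_block_append)
qed

section \<open>Realization by LOPP circuits\<close>

text \<open>In Gray-code coordinates the \<open>2^(k+n+l)\<close>-mode circuit \<open>L\<close> is \<open>id \<otimes> M \<otimes> id\<close>, with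
  identities of dimension \<open>2^k\<close> and \<open>2^l\<close>: the matrix \<open>enc sig k l\<close> has to produce from an
  \<open>n\<close>-qubit circuit with semantics \<open>M\<close>.\<close>
definition realizes :: "nat \<Rightarrow> nat \<Rightarrow> nat \<Rightarrow> (bool list \<Rightarrow> bool list \<Rightarrow> complex) \<Rightarrow> lc \<Rightarrow> bool" where
  "realizes k n l M L \<longleftrightarrow> lmodes L = 2 ^ (k + n + l) \<and>
     (\<forall>u v. length u = k + n + l \<longrightarrow> length v = k + n + l \<longrightarrow>
        lsem L (gray_index u) (gray_index v) = embed_block k n M u v)"

lemma realizesI:
  assumes "lmodes L = 2 ^ (k + n + l)"
    and "\<And>u v. length u = k + n + l \<Longrightarrow> length v = k + n + l \<Longrightarrow>
           lsem L (gray_index u) (gray_index v) = embed_block k n M u v"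
  shows "realizes k n l M L"
  using assms by (simp add: realizes_def)

lemma realizesD:
  "realizes k n l M L \<Longrightarrow> lmodes L = 2 ^ (k + n + l)"
  "realizes k n l M L \<Longrightarrow> length u = k + n + l \<Longrightarrow> length v = k + n + l \<Longrightarrow>
     lsem L (gray_index u) (gray_index v) = embed_block k n M u v"
  by (simp_all add: realizes_def)

lemma realizes_0_0_iff:
  "realizes 0 n 0 M L \<longleftrightarrow> lmodes L = 2 ^ n \<and>
     (\<forall>u v. length u = n \<longrightarrow> length v = n \<longrightarrow> lsem L (gray_index u) (gray_index v) = M u v)"
  by (simp add: realizes_def embed_block_0)

lemma realizes_cong:
  assumes "realizes k n l M L" "\<And>y x. length y = n \<Longrightarrow> length x = n \<Longrightarrow> M y x = M' y x"
  shows "realizes k n l M' L"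
  using assms by (simp add: realizes_def embed_block_cong[of n M M'])

lemma realizes_LComp:
  assumes A: "realizes k n l A LA" and B: "realizes k n l B LB"
  shows "realizes k n l (\<lambda>y x. \<Sum>t\<in>bitstrings n. A y t * B t x) (LComp LA LB)"
proof (rule realizesI)
  show "lmodes (LComp LA LB) = 2 ^ (k + n + l)" using realizesD(1)[OF B] by simp
  fix u v :: "bool list" assume uv: "length u = k + n + l" "length v = k + n + l"
  have "lsem (LComp LA LB) (gray_index u) (gray_index v)
      = (\<Sum>w\<in>bitstrings (k + n + l). lsem LA (gray_index u) (gray_index w) * lsem LB (gray_index w) (gray_index v))"
    by (rule lsem_LComp_bitstrings[OF realizesD(1)[OF B]])
  also have "\<dots> = (\<Sum>w\<in>bitstrings (k + n + l). embed_block k n A u w * embed_block k n B w v)"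
    using uv by (intro sum.cong) (simp_all add: realizesD(2)[OF A] realizesD(2)[OF B])
  also have "\<dots> = embed_block k n (\<lambda>y x. \<Sum>t\<in>bitstrings n. A y t * B t x) u v"
    using uv by (rule sum_embed_block_mult)
  finally show "lsem (LComp LA LB) (gray_index u) (gray_index v) = \<dots>" .
qed

lemma realizes_regroup:
  assumes "realizes (k + m) n (p + l) A L"
  shows "realizes k (m + n + p) l (embed_block m n A) L"
proof (rule realizesI)
  show "lmodes L = 2 ^ (k + (m + n + p) + l)"
    using realizesD(1)[OF assms] by (simp add: ac_simps)
  fix u v :: "bool list" assume "length u = k + (m + n + p) + l" "length v = k + (m + n + p) + l"
  then show "lsem L (gray_index u) (gray_index v) = embed_block k (m + n + p) (embed_block m n A) u v"
    using realizesD(2)[OF assms, of u v] embed_block_embed_block[of u k m n p l v A] by (simp add: ac_simps)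
qed

lemma realizes_tensor:
  assumes A: "realizes (k + n1) n2 l A LA" and B: "realizes k n1 (l + n2) B LB"
  shows "realizes k (n1 + n2) l
           (\<lambda>y x. B (take n1 y) (take n1 x) * A (drop n1 y) (drop n1 x)) (LComp LA LB)"
proof -
  have "realizes k (n1 + n2) l (embed_block n1 n2 A) LA"
    using realizes_regroup[of k n1 n2 0 l A LA] A by simp
  moreover have "realizes k (n1 + n2) l (embed_block 0 n1 B) LB"
    using realizes_regroup[of k 0 n1 n2 l B LB] B by (simp add: ac_simps)
  ultimately show ?thesis
    by (rule realizes_cong[OF realizes_LComp]) (rule sum_embed_block_tensor)
qed

lemma realizes_lpow_diagonal:
  assumes "lmodes X = 1"
  shows "realizes k n l (\<lambda>y x. if y = x then lsem X 0 0 else 0) (lpow X (2 ^ (k + n + l)))"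
proof (rule realizesI)
  show "lmodes (lpow X (2 ^ (k + n + l))) = 2 ^ (k + n + l)" using assms by (simp add: lmodes_lpow)
  fix u v :: "bool list" assume uv: "length u = k + n + l" "length v = k + n + l"
  have "lsem (lpow X (2 ^ (k + n + l))) (1 * gray_index u + 0) (1 * gray_index v + 0)
      = (if gray_index u = gray_index v then lsem X 0 0 else 0)"
    using assms uv gray_index_less[of u] gray_index_less[of v] by (intro lsem_lpow_block) auto
  then show "lsem (lpow X (2 ^ (k + n + l))) (gray_index u) (gray_index v)
      = embed_block k n (\<lambda>y x. if y = x then lsem X 0 0 else 0) u v"
    using uv gray_index_inj[of u v] by (auto simp: embed_block_diagonal)
qed

section \<open>The permutation circuits\<close>

definition swap_blocks :: "nat \<Rightarrow> nat \<Rightarrow> 'a list \<Rightarrow> 'a list" where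
  "swap_blocks k n w = take k w @ drop (k + n) w @ take n (drop k w)"

lemma swap_blocks_append:
  "length x = k \<Longrightarrow> length y = n \<Longrightarrow> swap_blocks k n (x @ y @ z) = x @ z @ y"
  by (simp add: swap_blocks_def)

lemma length_swap_blocks [simp]: "length w = k + n + l \<Longrightarrow> length (swap_blocks k n w) = k + n + l"
  by (simp add: swap_blocks_def)

lemma eq_swap_blocks_iff:
  assumes "length u = k + n + l" "length w = k + n + l"
  shows "u = swap_blocks k l w \<longleftrightarrow> w = swap_blocks k n u"
proof -
  obtain x y z where "u = x @ y @ z" "length x = k" "length y = n" "length z = l"
    using assms(1) by (rule split_length_sum)
  moreover obtain x' z' y' where "w = x' @ z' @ y'" "length x' = k" "length z' = l" "length y' = n"
    using assms(2) by (metis split_length_sum add.assoc add.commute)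
  ultimately show ?thesis by (auto simp: swap_blocks_append)
qed

lemma lmodes_sigma: "sigma_spec sig \<Longrightarrow> lmodes (sig k n l) = 2 ^ (k + n + l)"
  by (simp add: sigma_spec_def Let_def)

lemma lsem_sigma:
  assumes sig: "sigma_spec sig" and uv: "length u = k + n + l" "length v = k + n + l"
  shows "lsem (sig k n l) (gray_index u) (gray_index v) = (if u = swap_blocks k n v then 1 else 0)"
proof -
  obtain x y z where v: "v = x @ y @ z" "length x = k" "length y = n" "length z = l"
    using uv(2) by (rule split_length_sum)
  have "(\<Sum>i<2 ^ (k + n + l). \<Sum>j<2 ^ (k + n + l).
          grayM (k + n + l) u i * lsem (sig k n l) i j * grayInvM (k + n + l) j v)
      = (if u = x @ z @ y then 1 else 0)"
    using sig uv v unfolding sigma_spec_def Let_def by blast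
  moreover have "(\<Sum>i<2 ^ (k + n + l). \<Sum>j<2 ^ (k + n + l).
          grayM (k + n + l) u i * lsem (sig k n l) i j * grayInvM (k + n + l) j v)
      = lsem (sig k n l) (gray_index u) (gray_index v)"
    using uv by (simp add: mult.assoc sum_distrib_left[symmetric] sum_grayInvM_right sum_grayM_left)
  ultimately show ?thesis using v by (simp add: swap_blocks_append)
qed

lemma lsem_LComp_sigma_right:
  assumes "sigma_spec sig" "length v = k + n + l"
  shows "lsem (LComp L (sig k n l)) i (gray_index v) = lsem L i (gray_index (swap_blocks k n v))"
proof -
  have "lsem (LComp L (sig k n l)) i (gray_index v)
      = (\<Sum>w\<in>bitstrings (k + n + l). lsem L i (gray_index w) * (if w = swap_blocks k n v then 1 else 0))"
  proof (subst lsem_LComp_bitstrings[OF lmodes_sigma[OF assms(1)]], intro sum.cong refl)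
    fix w assume "w \<in> bitstrings (k + n + l)"
    then show "lsem L i (gray_index w) * lsem (sig k n l) (gray_index w) (gray_index v)
        = lsem L i (gray_index w) * (if w = swap_blocks k n v then 1 else 0)"
      using assms by (simp add: lsem_sigma)
  qed
  also have "\<dots> = lsem L i (gray_index (swap_blocks k n v))"
    using assms(2) by (intro sum_bitstrings_delta) simp
  finally show ?thesis .
qed

lemma lsem_LComp_sigma_left:
  assumes "sigma_spec sig" "lmodes L = 2 ^ (k + n + l)" "length u = k + n + l"
  shows "lsem (LComp (sig k l n) L) (gray_index u) j = lsem L (gray_index (swap_blocks k n u)) j"
proof -
  have "lsem (LComp (sig k l n) L) (gray_index u) j
      = (\<Sum>w\<in>bitstrings (k + n + l). (if w = swap_blocks k n u then 1 else 0) * lsem L (gray_index w) j)"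
  proof (subst lsem_LComp_bitstrings[OF assms(2)], intro sum.cong refl)
    fix w assume "w \<in> bitstrings (k + n + l)"
    then have w: "length w = k + n + l" by simp
    have "lsem (sig k l n) (gray_index u) (gray_index w) = (if u = swap_blocks k l w then 1 else 0)"
      using assms(3) w by (intro lsem_sigma[OF assms(1)]) simp_all
    then show "lsem (sig k l n) (gray_index u) (gray_index w) * lsem L (gray_index w) j
        = (if w = swap_blocks k n u then 1 else 0) * lsem L (gray_index w) j"
      by (simp add: eq_swap_blocks_iff[OF assms(3) w])
  qed
  also have "\<dots> = lsem L (gray_index (swap_blocks k n u)) j"
    using assms(3) by (intro sum_bitstrings_delta) simp
  finally show ?thesis .
qed

lemma realizes_sigma_conjugate:
  assumes sig: "sigma_spec sig" and L: "realizes (k + l) n 0 M L"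
  shows "realizes k n l M (LComp (sig k l n) (LComp L (sig k n l)))"
proof (rule realizesI)
  show "lmodes (LComp (sig k l n) (LComp L (sig k n l))) = 2 ^ (k + n + l)"
    using lmodes_sigma[OF sig] by simp
  fix u v :: "bool list" assume uv: "length u = k + n + l" "length v = k + n + l"
  obtain x y z where u: "u = x @ y @ z" "length x = k" "length y = n" "length z = l"
    using uv(1) by (rule split_length_sum)
  obtain x' y' z' where v: "v = x' @ y' @ z'" "length x' = k" "length y' = n" "length z' = l"
    using uv(2) by (rule split_length_sum)
  have "lsem (LComp (sig k l n) (LComp L (sig k n l))) (gray_index u) (gray_index v)
      = lsem L (gray_index ((x @ z) @ y @ [])) (gray_index ((x' @ z') @ y' @ []))"
    using sig uv u v lmodes_sigma[OF sig]
    by (simp add: lsem_LComp_sigma_left lsem_LComp_sigma_right swap_blocks_append del: lsem.simps)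
  also have "\<dots> = embed_block (k + l) n M ((x @ z) @ y @ []) ((x' @ z') @ y' @ [])"
    using u v by (intro realizesD(2)[OF L]) simp_all
  also have "\<dots> = (if x @ z = x' @ z' then M y y' else 0)"
    using u v by (subst embed_block_append) simp_all
  also have "\<dots> = embed_block k n M u v"
    using u v by (simp add: embed_block_append)
  finally show "lsem (LComp (sig k l n) (LComp L (sig k n l))) (gray_index u) (gray_index v) = \<dots>" .
qed

lemma realizes_lpow:
  assumes B: "realizes 0 (Suc d) 0 (embed_block 1 d M) B" and m: "1 \<le> m"
  shows "realizes m d 0 M (lpow B (2 ^ (m - 1)))"
proof (rule realizesI)
  have pow_m: "(2::nat) ^ m = 2 ^ (m - 1) * 2" using m by (simp add: power_eq_if)
  have lmB: "lmodes B = 2 ^ Suc d" using realizesD(1)[OF B] by simp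
  then show "lmodes (lpow B (2 ^ (m - 1))) = 2 ^ (m + d + 0)"
    using pow_m by (simp add: lmodes_lpow power_add)
  fix u v :: "bool list" assume "length u = m + d + 0" "length v = m + d + 0"
  then obtain a b a' b' where u: "u = a @ b" "length a = m" "length b = d"
    and v: "v = a' @ b'" "length a' = m" "length b' = d"
    by (metis split_length_sum length_0_conv append_Nil2)
  define q q' where "q = gray_index a" and "q' = gray_index a'"
  have q_less: "q div 2 < 2 ^ (m - 1)" "q' div 2 < 2 ^ (m - 1)"
    using gray_index_less[of a] gray_index_less[of a'] u v pow_m by (simp_all add: q_def q'_def)
  have r_less: "gray_index (c # w) < 2 ^ Suc d" if "length w = d" for c w
    using gray_index_less[of "c # w"] that by simp
  have B_entry: "lsem B (gray_index (c # w)) (gray_index (c' # w')) = (if c = c' then M w w' else 0)"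
    if "length w = d" "length w' = d" for c c' w w'
    using B that unfolding realizes_0_0_iff by (simp add: embed_block_def del: gray_index.simps)
  have "lsem (lpow B (2 ^ (m - 1))) (gray_index u) (gray_index v)
      = lsem (lpow B (2 ^ (m - 1)))
          (2 ^ Suc d * (q div 2) + gray_index (odd q # b)) (2 ^ Suc d * (q' div 2) + gray_index (odd q' # b'))"
    using u v by (simp add: gray_index_append_pairs q_def q'_def)
  also have "\<dots> = (if q div 2 = q' div 2 then lsem B (gray_index (odd q # b)) (gray_index (odd q' # b')) else 0)"
    using u v by (intro lsem_lpow_block lmB r_less q_less)
  also have "\<dots> = (if q div 2 = q' div 2 \<and> odd q = odd q' then M b b' else 0)"
    using u v by (simp add: B_entry del: gray_index.simps)
  also have "\<dots> = (if a = a' then M b b' else 0)"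
  proof -
    have "q div 2 = q' div 2 \<and> odd q = odd q' \<longleftrightarrow> q = q'"
      by (metis div_mult_mod_eq odd_iff_mod_2_eq_one even_iff_mod_2_eq_zero)
    then show ?thesis using gray_index_inj[of a a'] u v by (auto simp: q_def q'_def)
  qed
  also have "\<dots> = embed_block m d M u v"
    using u v embed_block_append[of a m a' b d b' "[]" "[]" M] by simp
  finally show "lsem (lpow B (2 ^ (m - 1))) (gray_index u) (gray_index v) = \<dots>" .
qed

lemma realizes_conjugated_lpow:
  assumes "sigma_spec sig" "realizes 0 (Suc d) 0 (embed_block 1 d M) B" "k + l \<noteq> 0"
  shows "realizes k d l M (LComp (sig k l d) (LComp (lpow B (2 ^ (k + l - 1))) (sig k d l)))"
  using assms by (intro realizes_sigma_conjugate realizes_lpow) auto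

section \<open>The elementary blocks\<close>

lemma all_length_Suc_iff: "(\<forall>u. length u = Suc n \<longrightarrow> P u) \<longleftrightarrow> (\<forall>b u. length u = n \<longrightarrow> P (b # u))"
  by (metis length_Suc_conv)

lemma all_length_0_iff: "(\<forall>u. length u = 0 \<longrightarrow> P u) \<longleftrightarrow> P []"
  by auto

lemmas all_bitstrings_iff = all_length_Suc_iff all_length_0_iff all_bool_eq

lemma exp_minus_i_half_pi: "exp (- (\<i> * complex_of_real pi / 2)) = - \<i>"
proof -
  have "exp (- (\<i> * complex_of_real pi / 2)) = cis (- pi / 2)"
    by (simp add: cis_conv_exp)
  then show ?thesis by (simp add: complex_eq_iff)
qed

lemma of_real_sqrt_2_squared: "complex_of_real (sqrt 2) * complex_of_real (sqrt 2) = 2"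
  by (simp flip: of_real_mult)

lemma realizes_EH00: "realizes 0 1 0 (qsem QH) EH00"
  unfolding realizes_0_0_iff
  by (simp add: all_bitstrings_iff EH00_def exp_minus_i_half_pi cos_45 sin_45 field_simps of_real_sqrt_2_squared)



lemma realizes_BH: "realizes 0 2 0 (embed_block 1 1 (qsem QH)) BH"
  unfolding realizes_0_0_iff numeral_2_eq_2
  by (simp add: all_bitstrings_iff embed_block_def BH_def EH00_def exp_minus_i_half_pi cos_45 sin_45
      field_simps of_real_sqrt_2_squared)

lemma realizes_P00: "realizes 0 1 0 (qsem (QP \<phi>)) (LTens LId (Lph \<phi>))"
  unfolding realizes_0_0_iff by (simp add: all_bitstrings_iff bitval_def)

lemma realizes_BP: "realizes 0 2 0 (embed_block 1 1 (qsem (QP \<phi>))) (BP \<phi>)"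
  unfolding realizes_0_0_iff numeral_2_eq_2
  by (simp add: all_bitstrings_iff embed_block_def BP_def bitval_def)

lemma realizes_C00: "realizes 0 2 0 (qsem QCNOT) (LTens LId (LTens LId LSw))"
  unfolding realizes_0_0_iff numeral_2_eq_2 by (simp add: all_bitstrings_iff)

lemma realizes_BC: "realizes 0 3 0 (embed_block 1 2 (qsem QCNOT)) BC"
  unfolding realizes_0_0_iff numeral_3_eq_3
  by (simp add: all_bitstrings_iff embed_block_def BC_def numeral_2_eq_2)

lemma realizes_sigma_swap: "sigma_spec sig \<Longrightarrow> realizes m 2 0 (qsem QSW) (sig m 1 1)"
proof (rule realizesI)
  assume sig: "sigma_spec sig"
  then show "lmodes (sig m 1 1) = 2 ^ (m + 2 + 0)" by (simp add: lmodes_sigma)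
  have split: "\<exists>a p q. u = a @ [p, q] \<and> length a = m" if lu: "length u = m + 2 + 0" for u :: "bool list"
  proof -
    obtain a w c where "u = a @ w @ c" "length a = m" "length w = 2" "length c = 0"
      using lu by (rule split_length_sum)
    moreover obtain p q where "w = [p, q]"
      using \<open>length w = 2\<close> by (cases w; cases "tl w") auto
    ultimately show ?thesis by auto
  qed
  fix u v :: "bool list" assume "length u = m + 2 + 0" "length v = m + 2 + 0"
  then obtain a p q a' p' q' where u: "u = a @ [p, q]" "length a = m"
    and v: "v = a' @ [p', q']" "length a' = m"
    by (metis split)
  have "lsem (sig m 1 1) (gray_index u) (gray_index v) = (if a @ [p, q] = a' @ [q', p'] then 1 else 0)"
    using lsem_sigma[OF sig, of u m 1 1 v] u v by (simp add: swap_blocks_append[of a' m "[p']" 1 "[q']", simplified])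
  also have "\<dots> = embed_block m 2 (qsem QSW) u v"
    using u v embed_block_append[of a m a' "[p, q]" 2 "[p', q']" "[]" "[]" "qsem QSW"] by auto
  finally show "lsem (sig m 1 1) (gray_index u) (gray_index v) = embed_block m 2 (qsem QSW) u v" .
qed

lemma realizes_enc:
  assumes sig: "sigma_spec sig"
  shows "qwf C \<Longrightarrow> realizes k (qwires C) l (qsem C) (enc sig k l C)"
proof (induction C arbitrary: k l)
  case QH
  show ?case
    using realizes_EH00 realizes_BH realizes_conjugated_lpow[OF sig, of 1 "qsem QH" BH k l]
    by (auto simp: numeral_2_eq_2 simp del: qsem.simps)
next
  case (QP \<phi>)
  show ?case
    using realizes_P00 realizes_BP realizes_conjugated_lpow[OF sig, of 1 "qsem (QP \<phi>)" "BP \<phi>" k l]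
    by (auto simp: numeral_2_eq_2 simp del: qsem.simps)
next
  case QCNOT
  show ?case
    using realizes_C00 realizes_BC realizes_conjugated_lpow[OF sig, of 2 "qsem QCNOT" BC k l]
    by (auto simp: numeral_2_eq_2 numeral_3_eq_3 simp del: qsem.simps)
next
  case (QScal \<phi>)
  have "realizes k 0 l (qsem (QScal \<phi>)) (lpow (Lph \<phi>) (2 ^ (k + 0 + l)))"
    by (rule realizes_cong[OF realizes_lpow_diagonal]) simp_all
  then show ?case by (simp del: qsem.simps)
next
  case QId
  have "realizes k 1 l (qsem QId) (lpow LId (2 ^ (k + 1 + l)))"
    by (rule realizes_cong[OF realizes_lpow_diagonal]) simp_all
  then show ?case by (simp add: ac_simps del: qsem.simps)
next
  case QEmpty
  have "realizes k 0 l (qsem QEmpty) (lpow LId (2 ^ (k + 0 + l)))"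
    by (rule realizes_cong[OF realizes_lpow_diagonal]) simp_all
  then show ?case by (simp del: qsem.simps)
next
  case QSW
  show ?case
    using realizes_sigma_conjugate[OF sig realizes_sigma_swap[OF sig]] by (simp del: qsem.simps)
next
  case (QComp C2 C1)
  then have "realizes k (qwires C1) l (qsem C2) (enc sig k l C2)"
    and "realizes k (qwires C1) l (qsem C1) (enc sig k l C1)" by simp_all
  then show ?case by (simp add: realizes_LComp del: lsem.simps)
next
  case (QTens C1 C2)
  then show ?case
    using realizes_tensor[of k "qwires C1" "qwires C2" l "qsem C2" _ "qsem C1"] by simp
qed

theorem mainTheorem5:
  fixes sig :: "nat \<Rightarrow> nat \<Rightarrow> nat \<Rightarrow> lc" and C :: qc
  assumes "sigma_spec sig"
    and "qwf C"
    and "qwires C = n"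
  shows "\<forall>y\<in>bitstrings n. \<forall>k<2 ^ n.
           (\<Sum>j<2 ^ n. grayM n y j * lsem (E sig C) j k)
         = (\<Sum>x\<in>bitstrings n. qsem C y x * grayM n x k)"
proof (intro ballI allI impI)
  fix y and k :: nat assume y: "y \<in> bitstrings n" and k: "k < 2 ^ n"
  have E: "realizes 0 n 0 (qsem C) (E sig C)"
    using realizes_enc[OF assms(1,2), of 0 0] assms(3) by (simp add: E_def)
  have "(\<Sum>j<2 ^ n. grayM n y j * lsem (E sig C) j k) = lsem (E sig C) (gray_index y) (gray_index (gray n k))"
    using y k by (simp add: sum_grayM_left gray_index_gray)
  also have "\<dots> = qsem C y (gray n k)"
    using E y unfolding realizes_0_0_iff by simp
  also have "\<dots> = (\<Sum>x\<in>bitstrings n. qsem C y x * grayM n x k)"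
    by (simp add: grayM_def sum_bitstrings_delta(2))
  finally show "(\<Sum>j<2 ^ n. grayM n y j * lsem (E sig C) j k) = \<dots>" .
qed

end
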